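(* Let $t\ge 4$, $r\ge 3$ and $0\le d\le r-1$ be integers. Then there exists a sufficiently small constant $c=c(t,r)>0$ such that $$C_r(n,S_r(d,t))\ge \min\left\{c\,n^{\frac{1}{2(r-d)+1}},\ c\,n^{\frac{1}{d+1}}\right\}.$$
   Context: An $r$-graph is an $r$-uniform hypergraph; $K_n^{(r)}$ is the complete $r$-graph on $n$ vertices. A copy of an $r$-graph $H$ in $K_n^{(r)}$ is a subhypergraph isomorphic to $H$. An $(n,r,H)$-local coloring with $k$ colors is a family of edge-colorings $f_v:E(K_n^{(r)})\to[k]$, one per vertex $v$, such that for every copy $T$ of $H$ there is $u\in V(T)$ with $f_u$ injective on $E(T)$. $C_r(n,H)$ is the minimum such $k$. A sunflower $S_r(d,m)$ is an $r$-graph with $m$ edges $e_1,\dots,e_m$ such that $e_i\cap e_j=D$ for all distinct $i,j$, where $D$ is a fixed set of $d$ vertices (the core). *)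

theory Defs
  imports Complex_Main
begin

definition complete_edges :: "nat \<Rightarrow> nat \<Rightarrow> nat set set" where
  "complete_edges n r = {e. e \<subseteq> {0..<n} \<and> card e = r}"

definition is_sunflower :: "nat \<Rightarrow> nat \<Rightarrow> nat \<Rightarrow> 'a set \<Rightarrow> 'a set set \<Rightarrow> bool" where
  "is_sunflower r d m V E \<longleftrightarrow>
     finite E \<and> card E = m \<and> (\<forall>e\<in>E. finite e \<and> card e = r) \<and> V = \<Union>E \<and>
     (\<exists>D. card D = d \<and> (\<forall>e\<in>E. \<forall>e'\<in>E. e \<noteq> e' \<longrightarrow> e \<inter> e' = D))"

text \<open>Copies of S_r(d,m) in K_n^(r): subhypergraphs (given by their edge sets,
  vertex set = union of edges) which are sunflowers S_r(d,m).\<close>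
definition sunflower_copies :: "nat \<Rightarrow> nat \<Rightarrow> nat \<Rightarrow> nat \<Rightarrow> nat set set set" where
  "sunflower_copies n r d m =
     {T. T \<subseteq> complete_edges n r \<and> is_sunflower r d m (\<Union>T) T}"

text \<open>(n,r,S_r(d,m))-local colouring with k colours: f v is the colouring of vertex v.\<close>
definition local_coloring :: "nat \<Rightarrow> nat \<Rightarrow> nat \<Rightarrow> nat \<Rightarrow> nat \<Rightarrow> (nat \<Rightarrow> nat set \<Rightarrow> nat) \<Rightarrow> bool" where
  "local_coloring n r d m k f \<longleftrightarrow>
     (\<forall>v\<in>{0..<n}. \<forall>e\<in>complete_edges n r. f v e \<in> {0..<k}) \<and>
     (\<forall>T\<in>sunflower_copies n r d m. \<exists>u\<in>\<Union>T. inj_on (f u) T)"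

definition C_sunflower :: "nat \<Rightarrow> nat \<Rightarrow> nat \<Rightarrow> nat \<Rightarrow> nat" where
  "C_sunflower r n d m = (LEAST k. \<exists>f. local_coloring n r d m k f)"

end

theory Submission
  imports Defs "HOL-Library.FuncSet" "HOL-Library.Disjoint_Sets"
begin

(* Suppose a local coloring uses k colors and put m = r - d. Take a core D of d vertices and
   2k^(d+1) disjoint m-sets B beside it. By pigeonhole on the colors that the core vertices give
   to the edges D \<union> B, some 2k of these m-sets are colored alike by every core vertex. Every
   further vertex colors those 2k edges with only k colors, so it has at least k ordered
   collisions; averaging over the at most 4k^2 pairs, one pair B1, B2 collides for a set S of at
   least a 1/(4k) fraction of the remaining vertices. Cut S into m-sets and apply pigeonhole to
   the colors seen from B1 \<union> B2: when n is large, t - 2 of them, C_j, are colored alike by every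
   vertex of B1 \<union> B2. Then D \<union> B1, D \<union> B2 and the D \<union> C_j form a copy of S_r(d,t) without a
   rainbow vertex: core vertices identify the first two edges, vertices of B1 \<union> B2 identify two
   of the D \<union> C_j, and vertices of the C_j lie in S and again identify the first two edges.
   Hence n = O(k^max(2m+1, d+1)). *)

lemma card_le_card_image_add_collisions:
  assumes "finite U"
  shows "card U \<le> card (g ` U) + card {(i, j) \<in> U \<times> U. i \<noteq> j \<and> g i = g j}"
proof -
  define rep where "rep x = inv_into U g (g x)" for x
  have rep: "rep x \<in> U" "g (rep x) = g x" if "x \<in> U" for x
    using that by (auto simp: rep_def inv_into_into f_inv_into_f)
  have rep_ne: "rep x \<noteq> x" if "x \<in> U - rep ` U" for x
    using that by (metis DiffE imageI)
  have "card U \<le> card (rep ` U \<union> (U - rep ` U))"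
    using assms by (intro card_mono) auto
  also have "\<dots> \<le> card (rep ` U) + card (U - rep ` U)"
    by (rule card_Un_le)
  also have "card (rep ` U) \<le> card (g ` U)"
    using card_image_le[of "g ` U" "inv_into U g"] assms by (simp add: rep_def image_image)
  also have "card (U - rep ` U) \<le> card {(i, j) \<in> U \<times> U. i \<noteq> j \<and> g i = g j}"
  proof (rule card_inj_on_le)
    show "inj_on (\<lambda>x. (rep x, x)) (U - rep ` U)" by (auto intro: inj_onI)
    show "(\<lambda>x. (rep x, x)) ` (U - rep ` U) \<subseteq> {(i, j) \<in> U \<times> U. i \<noteq> j \<and> g i = g j}"
      using rep rep_ne by auto
    show "finite {(i, j) \<in> U \<times> U. i \<noteq> j \<and> g i = g j}"
      by (rule finite_subset[of _ "U \<times> U"]) (use assms in auto)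
  qed
  finally show ?thesis by simp
qed

lemma exists_popular_collision:
  fixes g :: "'w \<Rightarrow> 'i \<Rightarrow> nat"
  assumes "finite U" "card U = 2 * k" "0 < k" "finite W"
    and colors: "\<And>w i. w \<in> W \<Longrightarrow> i \<in> U \<Longrightarrow> g w i < k"
  obtains i j where "i \<in> U" "j \<in> U" "i \<noteq> j" "card W \<le> 4 * k * card {w \<in> W. g w i = g w j}"
proof -
  define Pairs where "Pairs = {(i, j) \<in> U \<times> U. i \<noteq> j}"
  define h where "h p = card {w \<in> W. g w (fst p) = g w (snd p)}" for p
  have fin: "finite Pairs" unfolding Pairs_def using assms(1) by (auto intro: finite_subset)
  have "k \<le> card {p \<in> Pairs. g w (fst p) = g w (snd p)}" if "w \<in> W" for w
  proof -
    have "card (g w ` U) \<le> card {..<k}" using colors that by (intro card_mono) auto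
    moreover have "{p \<in> Pairs. g w (fst p) = g w (snd p)} = {(i, j) \<in> U \<times> U. i \<noteq> j \<and> g w i = g w j}"
      unfolding Pairs_def by auto
    ultimately show ?thesis
      using card_le_card_image_add_collisions[OF assms(1), of "g w"] assms(2) by simp
  qed
  then have "card W * k \<le> (\<Sum>w\<in>W. card {p \<in> Pairs. g w (fst p) = g w (snd p)})"
    using sum_mono[of W "\<lambda>_. k"] by fastforce
  also have "\<dots> = (\<Sum>p\<in>Pairs. h p)"
    unfolding h_def using sum.swap_restrict[OF assms(4) fin, of "\<lambda>_ _. 1::nat"] by simp
  also have "\<dots> \<le> card Pairs * Max (h ` Pairs)"
    using sum_bounded_above[of Pairs h "Max (h ` Pairs)"] fin by simp
  also have "\<dots> \<le> (4 * k * k) * Max (h ` Pairs)"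
  proof -
    have "card Pairs \<le> card (U \<times> U)" unfolding Pairs_def using assms(1) by (intro card_mono) auto
    then show ?thesis using assms(2) by (intro mult_le_mono1) (simp add: card_cartesian_product)
  qed
  finally have "card W \<le> 4 * k * Max (h ` Pairs)"
    using assms(3) by (simp add: mult.commute mult.left_commute)
  moreover have "Pairs \<noteq> {}"
  proof -
    have "\<not> card U \<le> Suc 0" using assms(2,3) by simp
    then obtain i j where "i \<in> U" "j \<in> U" "i \<noteq> j" by (auto simp: card_le_Suc0_iff_eq[OF assms(1)])
    then show ?thesis unfolding Pairs_def by auto
  qed
  then have "Max (h ` Pairs) \<in> h ` Pairs" using fin by (intro Max_in) auto
  then obtain p where "p \<in> Pairs" "h p = Max (h ` Pairs)" by auto
  ultimately show ?thesis using that unfolding Pairs_def h_def by auto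
qed

lemma exists_agreeing_subset:
  fixes c :: "'i \<Rightarrow> 'v \<Rightarrow> nat"
  assumes "finite I" "finite X"
    and colors: "\<And>i v. i \<in> I \<Longrightarrow> v \<in> X \<Longrightarrow> c i v < k"
    and many: "k ^ card X * q < card I"
  obtains J where "J \<subseteq> I" "card J = Suc q" "\<And>i j v. i \<in> J \<Longrightarrow> j \<in> J \<Longrightarrow> v \<in> X \<Longrightarrow> c i v = c j v"
proof -
  define h where "h i = restrict (c i) X" for i
  define Y where "Y = (\<Pi>\<^sub>E v\<in>X. {..<k})"
  have hY: "h \<in> I \<rightarrow> Y" using colors unfolding h_def Y_def by auto
  have cardY: "card Y = k ^ card X" using assms(2) unfolding Y_def by (simp add: card_PiE)
  have "finite Y" using assms(2) unfolding Y_def by (simp add: finite_PiE)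
  moreover have "Y \<noteq> {}"
  proof -
    obtain i where "i \<in> I" using many by fastforce
    then show ?thesis using hY by blast
  qed
  ultimately obtain y where "card I \<le> card (h -` {y} \<inter> I) * card Y"
    using pigeonhole_card[OF hY assms(1)] by blast
  moreover have "card Y * q < card I" using many cardY by (simp add: mult.commute)
  ultimately have "card Y * q < card Y * card (h -` {y} \<inter> I)"
    by (metis mult.commute order_less_le_trans)
  then have "Suc q \<le> card (h -` {y} \<inter> I)"
    by (simp add: Suc_le_eq)
  then obtain J where J: "J \<subseteq> h -` {y} \<inter> I" "card J = Suc q"
    by (meson obtain_subset_with_card_n)
  have "c i v = c j v" if "i \<in> J" "j \<in> J" "v \<in> X" for i j v
  proof -
    have "i \<in> h -` {y}" "j \<in> h -` {y}" using J(1) that(1,2) by auto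
    then have "h i v = h j v" by simp
    then show ?thesis using that(3) unfolding h_def by simp
  qed
  with J that show ?thesis by blast
qed

lemma exists_disjoint_blocks:
  assumes "finite S" "N * m \<le> card S"
  obtains B where "disjoint_family_on B {..<N}" "\<And>j. j < N \<Longrightarrow> B j \<subseteq> S" "\<And>j. j < N \<Longrightarrow> card (B j) = m"
proof -
  obtain \<phi> where \<phi>: "bij_betw \<phi> {0..<card S} S" using ex_bij_betw_nat_finite[OF assms(1)] by blast
  define I where "I j = {j * m..<j * m + m}" for j
  have I_range: "I j \<subseteq> {0..<card S}" if "j < N" for j
  proof -
    have "(j + 1) * m \<le> N * m" using that by (intro mult_le_mono1) simp
    then show ?thesis using assms(2) unfolding I_def by auto
  qed
  have I_disj: "I i \<inter> I j = {}" if "i < j" for i j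
  proof -
    have "(i + 1) * m \<le> j * m" using that by (intro mult_le_mono1) simp
    then show ?thesis unfolding I_def by auto
  qed
  have inj: "inj_on \<phi> {0..<card S}" using \<phi> by (rule bij_betw_imp_inj_on)
  show ?thesis
  proof
    show "disjoint_family_on (\<lambda>j. \<phi> ` I j) {..<N}"
      unfolding disjoint_family_on_def
    proof (intro ballI impI)
      fix i j assume "i \<in> {..<N}" "j \<in> {..<N}" "i \<noteq> j"
      then have "\<phi> ` I i \<inter> \<phi> ` I j = \<phi> ` (I i \<inter> I j)"
        by (simp add: inj_on_image_Int[OF inj I_range I_range])
      also have "I i \<inter> I j = {}"
        using I_disj \<open>i \<noteq> j\<close> by (metis Int_commute linorder_neqE_nat)
      finally show "\<phi> ` I i \<inter> \<phi> ` I j = {}" by simp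
    qed
    show "\<phi> ` I j \<subseteq> S" if "j < N" for j
      using I_range[OF that] \<phi> by (auto simp: bij_betw_def)
    show "card (\<phi> ` I j) = m" if "j < N" for j
      using card_image[OF inj_on_subset[OF inj I_range[OF that]]] by (simp add: I_def)
  qed
qed

lemma disjoint_pair_Un_image:
  assumes "P1 \<inter> P2 = {}" "P1 \<noteq> {}" "P2 \<noteq> {}"
    and "disjoint_family_on Q J" "\<And>j. j \<in> J \<Longrightarrow> Q j \<noteq> {}" "(\<Union>j\<in>J. Q j) \<inter> (P1 \<union> P2) = {}"
    and "finite J"
  shows "disjoint ({P1, P2} \<union> Q ` J)" "card ({P1, P2} \<union> Q ` J) = card J + 2"
proof -
  have Q_J: "disjoint (Q ` J)" "inj_on Q J"
    using disjoint_family_on_iff_disjoint_image[of J Q] assms(4,5) by auto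
  have "disjoint {P1, P2}" using assms(1) by (auto simp: disjoint_def)
  then show "disjoint ({P1, P2} \<union> Q ` J)"
    using Q_J(1) assms(6) by (intro disjoint_union) auto
  have "P1 \<noteq> P2" using assms(1,2) by auto
  have "{P1, P2} \<inter> Q ` J = {}" using assms(2,3,6) by blast
  then have "card ({P1, P2} \<union> Q ` J) = card {P1, P2} + card (Q ` J)"
    using assms(7) by (intro card_Un_disjoint) auto
  also have "\<dots> = 2 + card J" using \<open>P1 \<noteq> P2\<close> card_image[OF Q_J(2)] by simp
  finally show "card ({P1, P2} \<union> Q ` J) = card J + 2" by simp
qed

lemma local_coloring_color_less:
  "local_coloring n r d t k f \<Longrightarrow> v < n \<Longrightarrow> e \<in> complete_edges n r \<Longrightarrow> f v e < k"
  unfolding local_coloring_def by auto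

lemma Un_mem_complete_edges:
  assumes "D \<union> P \<subseteq> {0..<n}" "D \<inter> P = {}" "card D + card P = r"
  shows "D \<union> P \<in> complete_edges n r"
proof -
  have "finite D" "finite P" using assms(1) finite_subset by blast+
  then show ?thesis using assms unfolding complete_edges_def by (simp add: card_Un_disjoint)
qed

lemma sunflower_copy_of_petals:
  assumes "card D = d" "finite Pset" "card Pset = t" "disjoint Pset"
    and petals: "\<And>P. P \<in> Pset \<Longrightarrow> D \<union> P \<in> complete_edges n r \<and> D \<inter> P = {}"
  shows "(\<union>) D ` Pset \<in> sunflower_copies n r d t"
  unfolding sunflower_copies_def is_sunflower_def
proof (intro CollectI conjI ballI)
  show "(\<union>) D ` Pset \<subseteq> complete_edges n r" using petals by auto
  show "finite ((\<union>) D ` Pset)" using assms(2) by simp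
  have "inj_on ((\<union>) D) Pset" using petals by (intro inj_onI) blast
  then show "card ((\<union>) D ` Pset) = t" using assms(3) by (simp add: card_image)
  fix e assume "e \<in> (\<union>) D ` Pset"
  then have "e \<in> complete_edges n r" using petals by auto
  then show "finite e" "card e = r"
    using finite_subset[of e "{0..<n}"] unfolding complete_edges_def by auto
next
  have "D \<union> P \<inter> (D \<union> Q) = D" if "P \<in> Pset" "Q \<in> Pset" "P \<noteq> Q" for P Q
    using that \<open>disjoint Pset\<close> by (auto simp: disjoint_def)
  then show "\<exists>D'. card D' = d \<and> (\<forall>e\<in>(\<union>) D ` Pset. \<forall>e'\<in>(\<union>) D ` Pset. e \<noteq> e' \<longrightarrow> e \<inter> e' = D')"
    using assms(1) by blast
qed simp

lemma local_coloring_rainbow_petal_vertex: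
  assumes "local_coloring n r d t k f" "card D = d" "finite Pset" "card Pset = t" "disjoint Pset"
    and petals: "\<And>P. P \<in> Pset \<Longrightarrow> D \<union> P \<in> complete_edges n r \<and> D \<inter> P = {}"
  obtains u where "u \<in> D \<union> \<Union>Pset" "inj_on (\<lambda>P. f u (D \<union> P)) Pset"
proof -
  have "(\<union>) D ` Pset \<in> sunflower_copies n r d t"
    using sunflower_copy_of_petals[OF assms(2-5) petals] .
  then obtain u where u: "u \<in> \<Union> ((\<union>) D ` Pset)" "inj_on (f u) ((\<union>) D ` Pset)"
    using assms(1) unfolding local_coloring_def by blast
  have "inj_on ((\<union>) D) Pset"
    using petals by (intro inj_onI) blast
  then have "inj_on (f u \<circ> (\<union>) D) Pset" using u(2) by (rule comp_inj_on)
  moreover have "u \<in> D \<union> \<Union>Pset" using u(1) by blast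
  ultimately show ?thesis using that by (simp add: comp_def)
qed

lemma exists_indistinguishable_petal_pair:
  assumes lc: "local_coloring n r d t k f" and "0 < k" "d < r"
    and a: "d + 2 * k ^ (d + 1) * (r - d) \<le> a" "a \<le> n"
  obtains P1 P2 where "P1 \<subseteq> {d..<a}" "P2 \<subseteq> {d..<a}" "P1 \<inter> P2 = {}" "card P1 = r - d" "card P2 = r - d"
    "\<And>v. v < d \<Longrightarrow> f v ({0..<d} \<union> P1) = f v ({0..<d} \<union> P2)"
    "n - a \<le> 4 * k * card {w \<in> {a..<n}. f w ({0..<d} \<union> P1) = f w ({0..<d} \<union> P2)}"
proof -
  define D where "D = {0..<d}"
  define L where "L = 2 * k ^ (d + 1)"
  have "L * (r - d) \<le> card {d..<a}" using a unfolding L_def by simp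
  then obtain A where A: "disjoint_family_on A {..<L}" "\<And>i. i < L \<Longrightarrow> A i \<subseteq> {d..<a}"
      "\<And>i. i < L \<Longrightarrow> card (A i) = r - d"
    using exists_disjoint_blocks[OF finite_atLeastLessThan] by blast
  have colors: "f v (D \<union> A i) < k" if "v < n" "i < L" for v i
  proof (rule local_coloring_color_less[OF lc \<open>v < n\<close>], rule Un_mem_complete_edges)
    show "D \<union> A i \<subseteq> {0..<n}" "D \<inter> A i = {}" using A(2)[OF \<open>i < L\<close>] a unfolding D_def by auto
    show "card D + card (A i) = r" using A(3)[OF \<open>i < L\<close>] \<open>d < r\<close> unfolding D_def by simp
  qed
  have core_colors: "f v (D \<union> A i) < k" if "i \<in> {..<L}" "v \<in> D" for i v
    using that colors a \<open>d < r\<close> unfolding D_def by simp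
  have "k ^ card D * (2 * k - 1) < k ^ d * (2 * k)"
    using \<open>0 < k\<close> unfolding D_def by simp
  also have "\<dots> = card {..<L}" unfolding L_def by simp
  finally obtain U where U: "U \<subseteq> {..<L}" "card U = Suc (2 * k - 1)"
      "\<And>i j v. i \<in> U \<Longrightarrow> j \<in> U \<Longrightarrow> v \<in> D \<Longrightarrow> f v (D \<union> A i) = f v (D \<union> A j)"
    using exists_agreeing_subset[where c = "\<lambda>i v. f v (D \<union> A i)", OF finite_lessThan _ core_colors]
    unfolding D_def by blast
  have "finite U" using U(1) finite_subset by blast
  moreover have "card U = 2 * k" using U(2) \<open>0 < k\<close> by simp
  moreover have "f w (D \<union> A i) < k" if "w \<in> {a..<n}" "i \<in> U" for w i
    using that U(1) colors by auto
  ultimately obtain i j where ij: "i \<in> U" "j \<in> U" "i \<noteq> j"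
      "card {a..<n} \<le> 4 * k * card {w \<in> {a..<n}. f w (D \<union> A i) = f w (D \<union> A j)}"
    using exists_popular_collision[where g = "\<lambda>w i. f w (D \<union> A i)", OF _ _ \<open>0 < k\<close> finite_atLeastLessThan]
    by blast
  have "i < L" "j < L" using ij U(1) by auto
  show ?thesis
  proof (rule that[of "A i" "A j"])
    show "A i \<inter> A j = {}" using A(1) ij(3) \<open>i < L\<close> \<open>j < L\<close> by (auto simp: disjoint_family_on_def)
    show "v < d \<Longrightarrow> f v ({0..<d} \<union> A i) = f v ({0..<d} \<union> A j)" for v
      using U(3)[OF ij(1,2)] unfolding D_def by simp
    show "n - a \<le> 4 * k * card {w \<in> {a..<n}. f w ({0..<d} \<union> A i) = f w ({0..<d} \<union> A j)}"
      using ij(4) unfolding D_def by simp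
  qed (use A \<open>i < L\<close> \<open>j < L\<close> in simp_all)
qed

lemma local_coloring_no_indistinguishable_sunflower:
  assumes lc: "local_coloring n r d t k f" and "d < r" "card D = d"
    and P: "P1 \<inter> P2 = {}" "card P1 = r - d" "card P2 = r - d"
    and Q: "disjoint_family_on Q J" "\<And>j. j \<in> J \<Longrightarrow> card (Q j) = r - d"
      "(\<Union>j\<in>J. Q j) \<inter> (P1 \<union> P2) = {}"
    and J: "finite J" "card J + 2 = t" "4 \<le> t"
    and vertices: "D \<union> P1 \<union> P2 \<union> (\<Union>j\<in>J. Q j) \<subseteq> {0..<n}" "D \<inter> (P1 \<union> P2 \<union> (\<Union>j\<in>J. Q j)) = {}"
    and core_agree: "\<And>v. v \<in> D \<Longrightarrow> f v (D \<union> P1) = f v (D \<union> P2)"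
      and P_agree: "\<And>i j v. i \<in> J \<Longrightarrow> j \<in> J \<Longrightarrow> v \<in> P1 \<union> P2 \<Longrightarrow> f v (D \<union> Q i) = f v (D \<union> Q j)"
      and Q_agree: "\<And>w. w \<in> (\<Union>j\<in>J. Q j) \<Longrightarrow> f w (D \<union> P1) = f w (D \<union> P2)"
  shows False
proof -
  have "P1 \<noteq> {}" "P2 \<noteq> {}" and nonempty_Q: "\<And>j. j \<in> J \<Longrightarrow> Q j \<noteq> {}"
    using P(2,3) Q(2) \<open>d < r\<close> by (metis card_gt_0_iff zero_less_diff)+
  have "inj_on Q J" using disjoint_family_on_iff_disjoint_image[of J Q] nonempty_Q Q(1) by auto
  have "P1 \<noteq> P2" using P(1) \<open>P1 \<noteq> {}\<close> by auto
  define Pset where "Pset = {P1, P2} \<union> Q ` J"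
  have "disjoint Pset" "card Pset = t"
    using disjoint_pair_Un_image[OF P(1) \<open>P1 \<noteq> {}\<close> \<open>P2 \<noteq> {}\<close> Q(1) _ Q(3) J(1)] nonempty_Q J(2)
    unfolding Pset_def by auto
  moreover have "D \<union> P \<in> complete_edges n r \<and> D \<inter> P = {}" if "P \<in> Pset" for P
  proof -
    have "D \<union> P \<subseteq> {0..<n}" "D \<inter> P = {}" "card P = r - d"
      using \<open>P \<in> Pset\<close> vertices P(2,3) Q(2) unfolding Pset_def by auto
    then show ?thesis using \<open>card D = d\<close> \<open>d < r\<close> by (auto intro: Un_mem_complete_edges)
  qed
  moreover have "finite Pset" using J(1) unfolding Pset_def by blast
  ultimately obtain u where u: "u \<in> D \<union> \<Union>Pset" "inj_on (\<lambda>P. f u (D \<union> P)) Pset"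
    using local_coloring_rainbow_petal_vertex[OF lc \<open>card D = d\<close>] by blast
  have "P1 \<in> Pset" "P2 \<in> Pset" "Q ` J \<subseteq> Pset" unfolding Pset_def by auto
  have "\<not> card J \<le> Suc 0" using J(2,3) by simp
  then obtain j1 j2 where "j1 \<in> J" "j2 \<in> J" "j1 \<noteq> j2"
    using card_le_Suc0_iff_eq[OF J(1)] by auto
  consider "u \<in> D" | "u \<in> P1 \<union> P2" | "u \<in> (\<Union>j\<in>J. Q j)"
    using u(1) unfolding Pset_def by blast
  then show False
  proof cases
    case 1
    then show False using core_agree u(2) \<open>P1 \<in> Pset\<close> \<open>P2 \<in> Pset\<close> \<open>P1 \<noteq> P2\<close> by (metis inj_onD)
  next
    case 2
    then have "Q j1 = Q j2"
      using P_agree[OF \<open>j1 \<in> J\<close> \<open>j2 \<in> J\<close>] u(2) \<open>Q ` J \<subseteq> Pset\<close> \<open>j1 \<in> J\<close> \<open>j2 \<in> J\<close>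
      by (metis image_subset_iff inj_onD)
    then show False using \<open>inj_on Q J\<close> \<open>j1 \<in> J\<close> \<open>j2 \<in> J\<close> \<open>j1 \<noteq> j2\<close> by (metis inj_onD)
  next
    case 3
    then show False using Q_agree u(2) \<open>P1 \<in> Pset\<close> \<open>P2 \<in> Pset\<close> \<open>P1 \<noteq> P2\<close> by (metis inj_onD)
  qed
qed

lemma card_indistinguishing_vertices_less:
  assumes lc: "local_coloring n r d t k f" and "4 \<le> t" "d < r" "card D = d"
    and P: "P1 \<inter> P2 = {}" "card P1 = r - d" "card P2 = r - d" "D \<inter> (P1 \<union> P2) = {}"
      "D \<union> P1 \<union> P2 \<subseteq> {0..<n}"
    and core_agree: "\<And>v. v \<in> D \<Longrightarrow> f v (D \<union> P1) = f v (D \<union> P2)"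
    and S: "S \<subseteq> {0..<n} - (D \<union> P1 \<union> P2)" "\<And>w. w \<in> S \<Longrightarrow> f w (D \<union> P1) = f w (D \<union> P2)"
  shows "card S < ((t - 3) * k ^ (2 * (r - d)) + 1) * (r - d)"
proof (rule ccontr)
  define N where "N = (t - 3) * k ^ (2 * (r - d)) + 1"
  assume "\<not> ?thesis"
  then have "N * (r - d) \<le> card S" unfolding N_def by simp
  then obtain Q where Q: "disjoint_family_on Q {..<N}" "\<And>j. j < N \<Longrightarrow> Q j \<subseteq> S"
      "\<And>j. j < N \<Longrightarrow> card (Q j) = r - d"
    using exists_disjoint_blocks[OF finite_subset[OF S(1) finite_Diff[OF finite_atLeastLessThan]]] by blast
  have "finite (P1 \<union> P2)" using P(5) by (meson finite_atLeastLessThan finite_subset le_sup_iff)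
  then have "card (P1 \<union> P2) = 2 * (r - d)" using P(1-3) by (simp add: card_Un_disjoint)
  then have "k ^ card (P1 \<union> P2) * (t - 3) < card {..<N}" unfolding N_def by simp
  moreover have "f v (D \<union> Q j) < k" if "j \<in> {..<N}" "v \<in> P1 \<union> P2" for j v
  proof -
    have "D \<union> Q j \<in> complete_edges n r"
      using that P(5) Q(2,3) S(1) \<open>card D = d\<close> \<open>d < r\<close> by (intro Un_mem_complete_edges) auto
    moreover have "v < n" using that P(5) by auto
    ultimately show ?thesis using local_coloring_color_less[OF lc] by blast
  qed
  ultimately obtain J where J: "J \<subseteq> {..<N}" "card J = Suc (t - 3)"
      "\<And>i j v. i \<in> J \<Longrightarrow> j \<in> J \<Longrightarrow> v \<in> P1 \<union> P2 \<Longrightarrow> f v (D \<union> Q i) = f v (D \<union> Q j)"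
    using exists_agreeing_subset[where c = "\<lambda>j v. f v (D \<union> Q j)", OF finite_lessThan \<open>finite (P1 \<union> P2)\<close>]
    by blast
  have "(\<Union>j\<in>J. Q j) \<subseteq> S" using J(1) Q(2) by auto
  show False
  proof (rule local_coloring_no_indistinguishable_sunflower[OF lc \<open>d < r\<close> \<open>card D = d\<close> P(1-3)])
    show "disjoint_family_on Q J" using Q(1) J(1) by (rule disjoint_family_on_mono[rotated])
    show "finite J" using J(1) finite_subset by blast
    show "card J + 2 = t" using J(2) \<open>4 \<le> t\<close> by simp
    show "card (Q j) = r - d" if "j \<in> J" for j using that J(1) Q(3) by blast
    show "(\<Union>j\<in>J. Q j) \<inter> (P1 \<union> P2) = {}" "D \<inter> (P1 \<union> P2 \<union> (\<Union>j\<in>J. Q j)) = {}"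
      using \<open>(\<Union>j\<in>J. Q j) \<subseteq> S\<close> S(1) P(4) by blast+
    show "D \<union> P1 \<union> P2 \<union> (\<Union>j\<in>J. Q j) \<subseteq> {0..<n}"
      using \<open>(\<Union>j\<in>J. Q j) \<subseteq> S\<close> S(1) P(5) by blast
    show "f w (D \<union> P1) = f w (D \<union> P2)" if "w \<in> (\<Union>j\<in>J. Q j)" for w
      using that \<open>(\<Union>j\<in>J. Q j) \<subseteq> S\<close> S(2) by blast
  qed (use J(3) core_agree \<open>4 \<le> t\<close> in blast)+
qed

lemma local_coloring_vertex_bound:
  assumes lc: "local_coloring n r d t k f" and "4 \<le> t" "d < r" "0 < k"
  shows "n < d + 2 * k ^ (d + 1) * (r - d) + 4 * k * (((t - 3) * k ^ (2 * (r - d)) + 1) * (r - d))"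
proof (rule ccontr)
  define a where "a = d + 2 * k ^ (d + 1) * (r - d)"
  define N where "N = ((t - 3) * k ^ (2 * (r - d)) + 1) * (r - d)"
  assume "\<not> ?thesis"
  then have n: "a + 4 * k * N \<le> n" unfolding a_def N_def by linarith
  obtain P1 P2 where P: "P1 \<subseteq> {d..<a}" "P2 \<subseteq> {d..<a}" "P1 \<inter> P2 = {}" "card P1 = r - d" "card P2 = r - d"
      "\<And>v. v < d \<Longrightarrow> f v ({0..<d} \<union> P1) = f v ({0..<d} \<union> P2)"
      "n - a \<le> 4 * k * card {w \<in> {a..<n}. f w ({0..<d} \<union> P1) = f w ({0..<d} \<union> P2)}"
    using exists_indistinguishable_petal_pair[OF lc \<open>0 < k\<close> \<open>d < r\<close>, of a] n unfolding a_def by auto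
  define S where "S = {w \<in> {a..<n}. f w ({0..<d} \<union> P1) = f w ({0..<d} \<union> P2)}"
  have "4 * k * N \<le> 4 * k * card S" using P(7) n unfolding S_def by linarith
  then have "N \<le> card S" using \<open>0 < k\<close> by simp
  moreover have "card S < N"
    unfolding N_def S_def
  proof (rule card_indistinguishing_vertices_less[OF lc \<open>4 \<le> t\<close> \<open>d < r\<close>])
    show "{0..<d} \<union> P1 \<union> P2 \<subseteq> {0..<n}" "{0..<d} \<inter> (P1 \<union> P2) = {}"
      using P(1,2) n unfolding a_def by auto
    show "{w \<in> {a..<n}. f w ({0..<d} \<union> P1) = f w ({0..<d} \<union> P2)} \<subseteq> {0..<n} - ({0..<d} \<union> P1 \<union> P2)"
      using P(1,2) unfolding a_def by auto
  qed (use P in auto)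
  ultimately show False by simp
qed

lemma vertex_bound_le_power:
  fixes d m t k :: nat
  assumes "0 < k" "3 \<le> t"
  shows "d + 2 * k ^ (d + 1) * m + 4 * k * (((t - 3) * k ^ (2 * m) + 1) * m)
    \<le> (d + 2 * m + 4 * m * (t - 2)) * k ^ max (2 * m + 1) (d + 1)"
proof -
  define K where "K = k ^ max (2 * m + 1) (d + 1)"
  have "1 \<le> K" using assms(1) unfolding K_def by simp
  have "k ^ (d + 1) \<le> K" "k ^ (2 * m + 1) \<le> K"
    using assms(1) unfolding K_def by (simp_all add: power_increasing)
  have "k \<le> k ^ (2 * m + 1)" using assms(1) by (simp add: Suc_leI)
  then have "k \<le> K" using \<open>k ^ (2 * m + 1) \<le> K\<close> by (rule order_trans)
  have "d + 2 * k ^ (d + 1) * m + 4 * k * (((t - 3) * k ^ (2 * m) + 1) * m)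
      = d + 2 * k ^ (d + 1) * m + 4 * m * (t - 3) * k ^ (2 * m + 1) + 4 * m * k"
    by (simp add: algebra_simps)
  also have "\<dots> \<le> d * K + 2 * K * m + 4 * m * (t - 3) * K + 4 * m * K"
    using \<open>1 \<le> K\<close> \<open>k ^ (d + 1) \<le> K\<close> \<open>k ^ (2 * m + 1) \<le> K\<close> \<open>k \<le> K\<close>
    by (intro add_mono mult_le_mono order.refl) simp_all
  also have "\<dots> = (d + 2 * m + 4 * m * ((t - 3) + 1)) * K"
    by (simp add: algebra_simps)
  also have "(t - 3) + 1 = t - 2" using assms(2) by simp
  finally show ?thesis unfolding K_def .
qed

lemma root_le_of_le_mult_power:
  fixes n M k E :: nat
  assumes "n \<le> M * k ^ E" "0 < E"
  shows "real n powr (1 / real E) \<le> real M powr (1 / real E) * real k"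
proof -
  have "real n powr (1 / real E) \<le> (real M * real k ^ E) powr (1 / real E)"
    using assms(1) by (intro powr_mono2) (auto simp flip: of_nat_mult of_nat_power)
  also have "\<dots> = real M powr (1 / real E) * (real k powr real E) powr (1 / real E)"
    using assms(2) by (simp add: powr_mult powr_realpow')
  also have "(real k powr real E) powr (1 / real E) = real k"
    using assms(2) by (simp add: powr_powr)
  finally show ?thesis .
qed

lemma local_coloring_colors_pos:
  assumes "local_coloring n r d t k f" "0 < r" "r \<le> n"
  shows "0 < k"
proof -
  have "{0..<r} \<in> complete_edges n r" using assms(3) unfolding complete_edges_def by auto
  moreover have "0 < n" using assms(2,3) by simp
  ultimately have "f 0 {0..<r} < k" by (rule local_coloring_color_less[OF assms(1), rotated])
  then show ?thesis by simp
qed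

lemma ex_local_coloring:
  assumes "0 < t" "0 < r"
  shows "\<exists>k f. local_coloring n r d t k f"
proof -
  have "finite (complete_edges n r)"
    unfolding complete_edges_def by (rule finite_subset[of _ "Pow {0..<n}"]) auto
  then obtain h where h: "bij_betw h (complete_edges n r) {0..<card (complete_edges n r)}"
    using ex_bij_betw_finite_nat by blast
  have "local_coloring n r d t (card (complete_edges n r)) (\<lambda>v. h)"
    unfolding local_coloring_def
  proof (intro conjI ballI)
    show "h e \<in> {0..<card (complete_edges n r)}" if "e \<in> complete_edges n r" for e
      using bij_betw_apply[OF h that] .
  next
    fix T assume "T \<in> sunflower_copies n r d t"
    then have T: "T \<subseteq> complete_edges n r" "card T = t" "\<And>e. e \<in> T \<Longrightarrow> card e = r"
      unfolding sunflower_copies_def is_sunflower_def by auto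
    obtain e where "e \<in> T" using T(2) assms(1) by fastforce
    moreover obtain u where "u \<in> e" using T(3)[OF \<open>e \<in> T\<close>] assms(2) by fastforce
    moreover have "inj_on h T" using bij_betw_imp_inj_on[OF h] T(1) by (rule inj_on_subset)
    ultimately show "\<exists>u\<in>\<Union>T. inj_on h T" by blast
  qed
  then show ?thesis by blast
qed

theorem theorem4:
  fixes t r d :: nat
  assumes "t \<ge> 4" and "r \<ge> 3" and "d \<le> r - 1"
  shows "\<exists>c>0. \<forall>n\<ge>r.
    real (C_sunflower r n d t) \<ge>
      min (c * real n powr (1 / (2 * (real r - real d) + 1))) (c * real n powr (1 / (real d + 1)))"
proof -
  have "d < r" using assms(2,3) by linarith
  define E where "E = max (2 * (r - d) + 1) (d + 1)"
  define M where "M = d + 2 * (r - d) + 4 * (r - d) * (t - 2)"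
  define c where "c = 1 / real M powr (1 / real E)"
  have "0 < E" "0 < M" using \<open>d < r\<close> unfolding E_def M_def by auto
  have "min (c * real n powr (1 / (2 * (real r - real d) + 1))) (c * real n powr (1 / (real d + 1)))
      \<le> real (C_sunflower r n d t)" if "r \<le> n" for n
  proof -
    define k where "k = C_sunflower r n d t"
    obtain f where f: "local_coloring n r d t k f"
      using LeastI_ex[OF ex_local_coloring] assms unfolding k_def C_sunflower_def by fastforce
    then have "0 < k" using local_coloring_colors_pos \<open>r \<le> n\<close> assms(2) by auto
    then have "n \<le> M * k ^ E"
      using local_coloring_vertex_bound[OF f assms(1) \<open>d < r\<close>] vertex_bound_le_power[of k t d "r - d"] assms(1)
      unfolding M_def E_def by linarith
    then have "c * real n powr (1 / real E) \<le> real k"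
      using root_le_of_le_mult_power[OF _ \<open>0 < E\<close>] \<open>0 < M\<close> unfolding c_def by (simp add: field_simps)
    moreover have "real E = 2 * (real r - real d) + 1 \<or> real E = real d + 1"
      using \<open>d < r\<close> unfolding E_def by (auto simp: max_def of_nat_diff)
    ultimately show ?thesis unfolding k_def by auto
  qed
  moreover have "0 < c" using \<open>0 < M\<close> unfolding c_def by simp
  ultimately show ?thesis by blast
qed

end
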